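(* Let $N:\mathbb R_+\to\mathbb R_+$ be measurable and let $\mathbf P\subset\mathbb P_{[0,1]}$ be a finite convex collection of bitiles. Then $$\mathbf P=\bigcup_{n\ge0}\mathbf P_n\ \cup\ \mathbf P_{null}$$ (disjoint union) such that for each $n\ge0$: $\operatorname{mass}(\mathbf P_n)\le 2^{-n}$; $\mathbf P_n$ is a convex forest whose trees $T\in\mathcal F_n$ satisfy $\sum_{T\in\mathcal F_n}|I_T|\lesssim 2^n$ (absolute implicit constant); and $C_Pf\equiv0$ for each $P\in\mathbf P_{null}$ and each $f$.
   Context: Notation. $\mathbb R_+=[0,\infty)$. $\mathcal D_+$ denotes the set of dyadic intervals $[2^jm,2^j(m+1))$ with $j\in\mathbb Z$, $m\in\mathbb Z_{\ge 0}$. The Walsh functions are $w_0=1_{[0,1)}$, $w_{2n}(x)=w_n(2x)+w_n(2x-1)$, $w_{2n+1}(x)=w_n(2x)-w_n(2x-1)$ ($n\ge 0$). A tile is a rectangle $p=I_p\times\omega_p\subset\mathbb R_+^2$ with $I_p,\omega_p\in\mathcal D_+$ and $|I_p||\omega_p|=1$; if $p=[2^jm,2^j(m+1))\times[2^{-j}n,2^{-j}(n+1))$ its Walsh wave packet is $W_p(x)=2^{-j/2}w_n(2^{-j}x-m)$. A bitile is $P=I_P\times\omega_P$ with $I_P,\omega_P\in\mathcal D_+$ and $|I_P||\omega_P|=2$; $\omega_{P_l},\omega_{P_u}$ are the left and right halves of $\omega_P$, and $P_l=I_P\times\omega_{P_l}$, $P_u=I_P\times\omega_{P_u}$ are tiles.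 $\mathbb P_{all}$ is the set of all bitiles, and $\mathbb P_{[0,1]}=\{P\in\mathbb P_{all}:I_P\subset[0,1]\}$. For bitiles, $P\le P'$ means $I_P\subset I_{P'}$ and $\omega_{P'}\subset\omega_P$. A collection $\mathbf P$ of bitiles is convex if $P,P''\in\mathbf P$, $P'\in\mathbb P_{all}$ and $P\le P'\le P''$ imply $P'\in\mathbf P$. A tree $T$ with top data $(I_T,\xi_T)$, where $I_T\in\mathcal D_+$ and $\xi_T\in\mathbb R_+$ is not a dyadic rational, is a collection of bitiles with $I_P\subset I_T$ and $\xi_T\in\omega_P$ for all $P\in T$. A forest is a finite collection of bitiles which is a disjoint union of convex trees $T\in\mathcal F$ (the trees together with their top data are part of the data of the forest); it is a convex forest if moreover the whole collection is convex. Model operator: $C_{\mathbf P}f(x)=\sum_{P\in\mathbf P}\langle f,W_{P_u}\rangle W_{P_u}(x)1_{\omega_{P_l}}(N(x))$ (and $C_P=C_{\{P\}}$). Mass (relative to $N$): $E(P)=I_P\cap N^{-1}(\omega_P)$ and $\operatorname{mass}(\mathbf P)=\sup_{P\in\mathbf P}|E(P)|/|I_P|$. *)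

theory Defs
  imports "HOL-Analysis.Analysis"
begin

definition dint :: "int \<Rightarrow> nat \<Rightarrow> real set" where
  "dint j m = {2 powr (real_of_int j) * real m ..< 2 powr (real_of_int j) * (real m + 1)}"

definition dyadic_intervals :: "real set set" where
  "dyadic_intervals = {dint j m | j m. True}"

definition dyadic_rational :: "real \<Rightarrow> bool" where
  "dyadic_rational x \<longleftrightarrow> (\<exists>k::int. \<exists>j::nat. x = real_of_int k / 2 ^ j)"

function walsh :: "nat \<Rightarrow> real \<Rightarrow> real" where
  "walsh n x =
     (if n = 0 then indicator {0..<1} x
      else if even n then walsh (n div 2) (2 * x) + walsh (n div 2) (2 * x - 1)
      else walsh (n div 2) (2 * x) - walsh (n div 2) (2 * x - 1))"
  by auto
termination by (relation "Wellfounded.measure fst") auto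

text \<open>Tiles: (j, m, n) encodes p = [2^j m, 2^j(m+1)) x [2^{-j} n, 2^{-j}(n+1)).
  Every tile arises this way, uniquely.\<close>
type_synonym tile = "int \<times> nat \<times> nat"

definition tile_I :: "tile \<Rightarrow> real set" where
  "tile_I p = (case p of (j, m, n) \<Rightarrow> dint j m)"

definition tile_\<omega> :: "tile \<Rightarrow> real set" where
  "tile_\<omega> p = (case p of (j, m, n) \<Rightarrow> dint (- j) n)"

definition wave :: "tile \<Rightarrow> real \<Rightarrow> real" where
  "wave p x = (case p of (j, m, n) \<Rightarrow>
      2 powr (- real_of_int j / 2) * walsh n (2 powr (- real_of_int j) * x - real m))"

text \<open>Bitiles: (j, m, n) encodes P = [2^j m, 2^j(m+1)) x [2^{1-j} n, 2^{1-j}(n+1)).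
  Every bitile (|I_P||omega_P| = 2, both dyadic) arises this way, uniquely,
  so the set P_all of all bitiles is UNIV :: bitile set.\<close>
type_synonym bitile = "int \<times> nat \<times> nat"

definition bI :: "bitile \<Rightarrow> real set" where
  "bI P = (case P of (j, m, n) \<Rightarrow> dint j m)"

definition b\<omega> :: "bitile \<Rightarrow> real set" where
  "b\<omega> P = (case P of (j, m, n) \<Rightarrow> dint (1 - j) n)"

text \<open>Lower (left half of omega_P) and upper (right half) tiles.\<close>
definition Pl :: "bitile \<Rightarrow> tile" where
  "Pl P = (case P of (j, m, n) \<Rightarrow> (j, m, 2 * n))"

definition Pu :: "bitile \<Rightarrow> tile" where
  "Pu P = (case P of (j, m, n) \<Rightarrow> (j, m, 2 * n + 1))"

definition P_unit :: "bitile set" where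
  "P_unit = {P. bI P \<subseteq> {0..1}}"

definition bitile_le :: "bitile \<Rightarrow> bitile \<Rightarrow> bool" where
  "bitile_le P P' \<longleftrightarrow> bI P \<subseteq> bI P' \<and> b\<omega> P' \<subseteq> b\<omega> P"

definition convex_coll :: "bitile set \<Rightarrow> bool" where
  "convex_coll Ps \<longleftrightarrow> (\<forall>P\<in>Ps. \<forall>P''\<in>Ps. \<forall>P'. bitile_le P P' \<and> bitile_le P' P'' \<longrightarrow> P' \<in> Ps)"

definition is_tree :: "real set \<Rightarrow> real \<Rightarrow> bitile set \<Rightarrow> bool" where
  "is_tree IT \<xi> T \<longleftrightarrow> IT \<in> dyadic_intervals \<and> \<xi> \<ge> 0 \<and> \<not> dyadic_rational \<xi> \<and>
     (\<forall>P\<in>T. bI P \<subseteq> IT \<and> \<xi> \<in> b\<omega> P)"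

definition is_forest :: "bitile set \<Rightarrow> (real set \<times> real \<times> bitile set) set \<Rightarrow> bool" where
  "is_forest Ps F \<longleftrightarrow> finite Ps \<and> finite F \<and>
     (\<forall>(IT, \<xi>, T)\<in>F. is_tree IT \<xi> T \<and> convex_coll T) \<and>
     (\<forall>t1\<in>F. \<forall>t2\<in>F. t1 \<noteq> t2 \<longrightarrow> snd (snd t1) \<inter> snd (snd t2) = {}) \<and>
     Ps = (\<Union>t\<in>F. snd (snd t))"

definition is_convex_forest :: "bitile set \<Rightarrow> (real set \<times> real \<times> bitile set) set \<Rightarrow> bool" where
  "is_convex_forest Ps F \<longleftrightarrow> is_forest Ps F \<and> convex_coll Ps"

definition inner_prod :: "(real \<Rightarrow> complex) \<Rightarrow> (real \<Rightarrow> real) \<Rightarrow> complex" where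
  "inner_prod f g = (LINT x|lborel. f x * complex_of_real (g x))"

definition model_op :: "(real \<Rightarrow> real) \<Rightarrow> bitile set \<Rightarrow> (real \<Rightarrow> complex) \<Rightarrow> real \<Rightarrow> complex" where
  "model_op N Ps f x = (\<Sum>P\<in>Ps. inner_prod f (wave (Pu P)) * complex_of_real (wave (Pu P) x)
        * complex_of_real (indicator (tile_\<omega> (Pl P)) (N x)))"

definition E :: "(real \<Rightarrow> real) \<Rightarrow> bitile \<Rightarrow> real set" where
  "E N P = bI P \<inter> N -` b\<omega> P"

definition mass :: "(real \<Rightarrow> real) \<Rightarrow> bitile set \<Rightarrow> real" where
  "mass N Ps = (if Ps = {} then 0
     else (SUP P\<in>Ps. measure lebesgue (E N P) / measure lborel (bI P)))"

end

theory Submission imports Defs begin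

(* Let d(P) = |E(P)|/|I_P| be the density of a bitile and M(P) the largest
   density of a bitile of the collection lying above P.  M is antitone along
   the order of bitiles, so the level "M(P) lies in (2^-(n+1), 2^-n]" is
   monotone and its level sets P_n are convex; bitiles with M(P) = 0 are put
   on one level so high that the trivial bound sum |I_P| <= 2^n applies there.
   Each P in P_n lies below a bitile of P_n of density > 2^-(n+1), hence below
   a maximal such bitile.  Maximal bitiles are pairwise incomparable, so their
   sets E are disjoint subsets of [0,1], which gives sum |I_T| <= 2^(n+1) over
   these tops; grouping every bitile under a top produces convex trees.
   No bitile needs to go to P_null, and the constant is 2. *)

section \<open>Dyadic intervals\<close>

lemma measure_dint: "measure lborel (dint j m) = 2 powr real_of_int j"
  by (simp add: dint_def algebra_simps)

lemma dint_lmeasurable: "dint j m \<in> lmeasurable"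
  unfolding dint_def
  by (rule fmeasurableI2[OF lmeasurable_cbox[of "2 powr real_of_int j * real m"
        "2 powr real_of_int j * (real m + 1)"]]) auto

lemma dint_nonneg: "x \<in> dint j m \<Longrightarrow> 0 \<le> x"
  by (auto simp: dint_def intro: order_trans[rotated])

lemma dint_subset_scale:
  assumes "dint j m \<subseteq> dint j' m'"
  shows "j \<le> j' \<and> (j = j' \<longrightarrow> m = m')"
proof -
  have "measure lborel (dint j m) \<le> measure lborel (dint j' m')"
    using assms by (intro measure_mono_fmeasurable) (auto simp: dint_def fmeasurable_def)
  then have "j \<le> j'" by (simp add: measure_dint)
  moreover have "m = m'" if "j = j'"
  proof -
    let ?a = "2 powr real_of_int j"
    have "?a * real m \<in> dint j m" by (simp add: dint_def)
    then have "?a * real m \<in> dint j' m'" using assms by blast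
    then have "?a * real m' \<le> ?a * real m \<and> ?a * real m < ?a * (real m' + 1)"
      using that by (simp add: dint_def)
    then have "real m' \<le> real m \<and> real m < real m' + 1" by simp
    then show ?thesis by linarith
  qed
  ultimately show ?thesis by blast
qed

lemma dint_nested:
  assumes x: "x \<in> dint j m" "x \<in> dint j' m'" and "j \<le> j'"
  shows "dint j m \<subseteq> dint j' m'"
proof -
  define d where "d = nat (j' - j)"
  define a where "a = 2 powr real_of_int j"
  have a: "a > 0" by (simp add: a_def)
  have scale: "2 powr real_of_int j' = a * 2 ^ d"
    using \<open>j \<le> j'\<close> by (simp add: a_def d_def powr_realpow[symmetric] powr_add[symmetric])
  have h1: "a * real m \<le> x" "x < a * (real m + 1)" using x(1) by (auto simp: dint_def a_def)
  have h2: "a * (2^d * real m') \<le> x" "x < a * (2^d * (real m' + 1))"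
    using x(2) scale by (auto simp: dint_def mult.assoc)
  have "a * (2^d * real m') < a * (real m + 1)" "a * real m < a * (2^d * (real m' + 1))"
    using h1 h2 by linarith+
  then have "2^d * real m' < real m + 1" "real m < 2^d * (real m' + 1)"
    using a by (simp_all only: mult_less_cancel_left_pos)
  then have "real (2^d * m') < real (m + 1)" "real m < real (2^d * (m' + 1))"
    by (simp_all add: algebra_simps)
  then have "2^d * m' \<le> m" "m + 1 \<le> 2^d * (m' + 1)"
    by (simp_all only: of_nat_less_iff)
  then have "real (2^d * m') \<le> real m" "real (m + 1) \<le> real (2^d * (m' + 1))"
    by (simp_all only: of_nat_le_iff)
  then have "2^d * real m' \<le> real m" "real m + 1 \<le> 2^d * (real m' + 1)"
    by (simp_all add: algebra_simps)
  then have "a * (2^d * real m') \<le> a * real m" "a * (real m + 1) \<le> a * (2^d * (real m' + 1))"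
    using a by (simp_all only: mult_le_cancel_left_pos)
  then show ?thesis using scale by (auto simp: dint_def a_def mult.assoc)
qed

text \<open>Dyadic intervals are uncountable, so they contain points which are not
  dyadic rationals; such points serve as frequencies of tree tops.\<close>
lemma dint_nondyadic: "\<exists>\<xi>\<in>dint j m. \<not> dyadic_rational \<xi>"
proof -
  have "{x. dyadic_rational x} \<subseteq> (\<lambda>(k::int, i::nat). real_of_int k / 2 ^ i) ` UNIV"
    by (auto simp: dyadic_rational_def)
  then have "countable {x. dyadic_rational x}" by (rule countable_subset) simp
  moreover have "uncountable (dint j m)"
    unfolding dint_def by (subst uncountable_half_open_interval_1) simp
  ultimately have "\<not> dint j m \<subseteq> {x. dyadic_rational x}" using countable_subset by blast
  then show ?thesis by blast
qed

section \<open>The order on bitiles\<close>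

lemma bitile_le_refl: "bitile_le P P"
  by (simp add: bitile_le_def)

lemma bitile_le_trans: "bitile_le P Q \<Longrightarrow> bitile_le Q R \<Longrightarrow> bitile_le P R"
  by (auto simp: bitile_le_def)

lemma bitile_le_scale: "bitile_le P Q \<Longrightarrow> fst P \<le> fst Q"
  by (cases P; cases Q) (auto simp: bitile_le_def bI_def dest: dint_subset_scale)

lemma bitile_le_same_scale:
  assumes "bitile_le P Q" "fst Q \<le> fst P"
  shows "P = Q"
proof -
  obtain j m n j' m' n' where P: "P = (j, m, n)" and Q: "Q = (j', m', n')"
    by (cases P; cases Q)
  have "j = j'" using bitile_le_scale[OF assms(1)] assms(2) P Q by simp
  moreover have "dint j m \<subseteq> dint j' m'" "dint (1 - j') n' \<subseteq> dint (1 - j) n"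
    using assms(1) P Q by (auto simp: bitile_le_def bI_def b\<omega>_def)
  ultimately show ?thesis using P Q by (auto dest: dint_subset_scale)
qed

lemma exists_maximal_above:
  assumes "finite A" "P \<in> A"
  shows "\<exists>t\<in>A. bitile_le P t \<and> (\<forall>u\<in>A. bitile_le t u \<longrightarrow> u = t)"
proof -
  define U where "U = {u\<in>A. bitile_le P u}"
  have "finite U" "P \<in> U" using assms by (simp_all add: U_def bitile_le_refl)
  then obtain t where t: "t \<in> U" "fst t = Max (fst ` U)"
    using Max_in[of "fst ` U"] by fastforce
  have "u = t" if "u \<in> A" "bitile_le t u" for u
  proof -
    have "u \<in> U" using that t(1) by (auto simp: U_def intro: bitile_le_trans)
    then have "fst u \<le> fst t" using t(2) \<open>finite U\<close> by simp
    then show ?thesis using bitile_le_same_scale[OF that(2)] by simp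
  qed
  then show ?thesis using t(1) by (auto simp: U_def)
qed

text \<open>Incomparable bitiles have disjoint sets E: a common point x would put
  both space intervals around x and both frequency intervals around N x, and
  nestedness of dyadic intervals then makes the bitiles comparable.\<close>
lemma E_disjoint_incomparable:
  assumes "\<not> bitile_le P Q" "\<not> bitile_le Q P"
  shows "E N P \<inter> E N Q = {}"
proof (rule ccontr)
  assume "E N P \<inter> E N Q \<noteq> {}"
  then obtain x where x: "x \<in> E N P" "x \<in> E N Q" by blast
  obtain j m n j' m' n' where P: "P = (j, m, n)" and Q: "Q = (j', m', n')"
    by (cases P; cases Q)
  have h: "x \<in> dint j m" "x \<in> dint j' m'" "N x \<in> dint (1 - j) n" "N x \<in> dint (1 - j') n'"
    using x P Q by (auto simp: E_def bI_def b\<omega>_def)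
  show False
  proof (cases "j \<le> j'")
    case True
    then have "bitile_le P Q"
      using dint_nested[OF h(1,2)] dint_nested[OF h(4,3)] P Q
      by (simp add: bitile_le_def bI_def b\<omega>_def)
    then show False using assms by blast
  next
    case False
    then have "bitile_le Q P"
      using dint_nested[OF h(2,1)] dint_nested[OF h(3,4)] P Q
      by (simp add: bitile_le_def bI_def b\<omega>_def)
    then show False using assms by blast
  qed
qed

section \<open>Densities and the packing bound\<close>

definition bitile_density :: "(real \<Rightarrow> real) \<Rightarrow> bitile \<Rightarrow> real" where
  "bitile_density N P = measure lebesgue (E N P) / measure lborel (bI P)"

lemma measure_bI_pos: "measure lborel (bI P) > 0"
  by (cases P) (simp add: bI_def measure_dint)

lemma bI_lmeasurable: "bI P \<in> lmeasurable"
  by (cases P) (simp add: bI_def dint_lmeasurable)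

lemma bI_nonneg: "bI P \<subseteq> {0..}"
  by (cases P) (auto simp: bI_def dint_nonneg)

lemma E_measurable:
  assumes "N \<in> borel_measurable (restrict_space lebesgue {0..})"
  shows "E N P \<in> sets lebesgue"
proof -
  have "N -` b\<omega> P \<inter> {0..} \<in> sets (restrict_space lebesgue {0..})"
    using measurable_sets[OF assms, of "b\<omega> P"] by (cases P) (simp add: b\<omega>_def dint_def)
  then have "N -` b\<omega> P \<inter> {0..} \<in> sets lebesgue"
    by (simp add: sets_restrict_space_iff)
  then have "bI P \<inter> (N -` b\<omega> P \<inter> {0..}) \<in> sets lebesgue"
    using bI_lmeasurable by blast
  moreover have "bI P \<inter> (N -` b\<omega> P \<inter> {0..}) = E N P"
    using bI_nonneg[of P] by (auto simp: E_def)
  ultimately show ?thesis by simp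
qed

lemma E_lmeasurable:
  assumes "N \<in> borel_measurable (restrict_space lebesgue {0..})"
  shows "E N P \<in> lmeasurable"
  by (rule fmeasurableI2[OF bI_lmeasurable _ E_measurable[OF assms]]) (auto simp: E_def)

lemma bitile_density_bounds: "0 \<le> bitile_density N P \<and> bitile_density N P \<le> 1"
proof (cases "E N P \<in> sets lebesgue")
  case True
  have "measure lebesgue (E N P) \<le> measure lebesgue (bI P)"
    using True bI_lmeasurable by (intro measure_mono_fmeasurable) (auto simp: E_def)
  also have "\<dots> = measure lborel (bI P)"
    by (cases P) (simp add: bI_def dint_def)
  finally show ?thesis using measure_bI_pos[of P] by (simp add: bitile_density_def)
next
  case False
  then show ?thesis by (simp add: bitile_density_def measure_notin_sets)
qed

lemma mass_le_of_density:
  assumes "\<forall>P\<in>Q. bitile_density N P \<le> (1/2) ^ n"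
  shows "mass N Q \<le> 2 powr - real n"
proof (cases "Q = {}")
  case False
  have "(SUP P\<in>Q. measure lebesgue (E N P) / measure lborel (bI P)) \<le> (1/2) ^ n"
    using False assms by (intro cSUP_least) (auto simp: bitile_density_def)
  then show ?thesis
    using False by (simp add: mass_def powr_minus powr_realpow power_one_over inverse_eq_divide)
qed (simp add: mass_def)

text \<open>Packing: pairwise incomparable bitiles over [0,1] whose sets E occupy at
  least the proportion \<delta> of their intervals have total length at most 1/\<delta>,
  since these sets E are disjoint subsets of [0,1].\<close>
lemma packing_incomparable:
  assumes N: "N \<in> borel_measurable (restrict_space lebesgue {0..})"
    and T: "finite T" "T \<subseteq> P_unit"
    and incomparable: "\<forall>s\<in>T. \<forall>t\<in>T. bitile_le s t \<longrightarrow> s = t"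
    and dense: "\<forall>t\<in>T. \<delta> * measure lborel (bI t) \<le> measure lebesgue (E N t)"
  shows "\<delta> * (\<Sum>t\<in>T. measure lborel (bI t)) \<le> 1"
proof -
  have E_sub: "E N t \<subseteq> {0..1}" if "t \<in> T" for t
    using that T(2) by (auto simp: P_unit_def E_def)
  have disjoint: "disjoint_family_on (E N) T"
    unfolding disjoint_family_on_def
  proof (intro ballI impI)
    fix s t assume "s \<in> T" "t \<in> T" "s \<noteq> t"
    then show "E N s \<inter> E N t = {}"
      using incomparable by (intro E_disjoint_incomparable) auto
  qed
  have union: "measure lebesgue (\<Union>t\<in>T. E N t) = (\<Sum>t\<in>T. measure lebesgue (E N t))"
    using E_measurable[OF N] fmeasurableD2[OF E_lmeasurable[OF N]]
    by (intro measure_finite_Union[OF T(1) _ disjoint]) (auto simp only: infinity_ennreal_def)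
  have "\<delta> * (\<Sum>t\<in>T. measure lborel (bI t)) \<le> (\<Sum>t\<in>T. measure lebesgue (E N t))"
    using dense by (simp add: sum_distrib_left sum_mono)
  also have "\<dots> = measure lebesgue (\<Union>t\<in>T. E N t)"
    by (rule union[symmetric])
  also have "\<dots> \<le> measure lebesgue {0..1::real}"
    using E_sub T(1) E_measurable[OF N] by (intro measure_mono_fmeasurable) auto
  finally show ?thesis by simp
qed

section \<open>Forests from a covering set of tops\<close>

lemma top_data_exists: "\<exists>\<xi>. \<forall>T. (\<forall>P\<in>T. bitile_le P t) \<longrightarrow> is_tree (bI t) \<xi> T"
proof -
  obtain j m n where t: "t = (j, m, n)" by (cases t)
  obtain \<xi> where \<xi>: "\<xi> \<in> b\<omega> t" "\<not> dyadic_rational \<xi>"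
    using dint_nondyadic[of "1 - j" n] t by (auto simp: b\<omega>_def)
  have "bI t \<in> dyadic_intervals" using t by (auto simp: bI_def dyadic_intervals_def)
  moreover have "\<xi> \<ge> 0" using \<xi>(1) t by (auto simp: b\<omega>_def dint_nonneg)
  ultimately show ?thesis using \<xi> by (auto simp: is_tree_def bitile_le_def)
qed

text \<open>A finite convex collection covered by finitely many tops is a convex
  forest whose total top length is at most that of the tops: each bitile joins
  the tree of the first top above it in a fixed enumeration of bitiles.  The
  first-top rule keeps the trees convex, since for P \<le> P' \<le> R the tops above R
  are above P', and those are above P.\<close>
lemma forest_from_tops:
  assumes Q: "finite Q" "convex_coll Q"
    and Tops: "finite Tops" "\<forall>P\<in>Q. \<exists>t\<in>Tops. bitile_le P t"
  shows "\<exists>F. is_convex_forest Q F \<and>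
    (\<Sum>(IT, \<xi>, T)\<in>F. measure lborel IT) \<le> (\<Sum>t\<in>Tops. measure lborel (bI t))"
proof -
  define top where "top P = (ARG_MIN to_nat t. t \<in> Tops \<and> bitile_le P t)" for P
  have top: "top P \<in> Tops \<and> bitile_le P (top P)"
    and top_first: "\<And>t. t \<in> Tops \<Longrightarrow> bitile_le P t \<Longrightarrow> to_nat (top P) \<le> to_nat t"
    if "P \<in> Q" for P
    using Tops(2) that arg_min_nat_lemma[of "\<lambda>t. t \<in> Tops \<and> bitile_le P t" _ to_nat]
    unfolding top_def by blast+
  obtain \<xi> where \<xi>: "\<And>t T. \<forall>P\<in>T. bitile_le P t \<Longrightarrow> is_tree (bI t) (\<xi> t) T"
    using top_data_exists by metis
  define tree where "tree t = {P\<in>Q. top P = t}" for t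
  define F where "F = (\<lambda>t. (bI t, \<xi> t, tree t)) ` Tops"
  have tree_convex: "convex_coll (tree t)" for t
    unfolding convex_coll_def
  proof (intro ballI allI impI)
    fix P R P' assume P: "P \<in> tree t" and R: "R \<in> tree t"
      and le: "bitile_le P P' \<and> bitile_le P' R"
    have PR: "P \<in> Q" "R \<in> Q" "top P = t" "top R = t" using P R by (auto simp: tree_def)
    have P': "P' \<in> Q" using Q(2) PR le unfolding convex_coll_def by blast
    have "to_nat (top P') \<le> to_nat t"
      using top_first[OF P', of t] top[OF PR(2)] PR(4) le by (metis bitile_le_trans)
    moreover have "to_nat t \<le> to_nat (top P')"
      using top_first[OF PR(1), of "top P'"] top[OF P'] PR(3) le by (metis bitile_le_trans)
    ultimately have "top P' = t" by simp
    then show "P' \<in> tree t" using P' by (simp add: tree_def)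
  qed
  have tree_is_tree: "is_tree (bI t) (\<xi> t) (tree t)" for t
  proof (rule \<xi>)
    show "\<forall>P\<in>tree t. bitile_le P t" using top unfolding tree_def by blast
  qed
  have "is_forest Q F"
    unfolding is_forest_def
  proof (intro conjI)
    show "finite Q" "finite F" using Q(1) Tops(1) by (auto simp: F_def)
    show "\<forall>(IT, \<xi>, T)\<in>F. is_tree IT \<xi> T \<and> convex_coll T"
      using tree_is_tree tree_convex by (auto simp: F_def)
    show "\<forall>t1\<in>F. \<forall>t2\<in>F. t1 \<noteq> t2 \<longrightarrow> snd (snd t1) \<inter> snd (snd t2) = {}"
      by (auto simp: F_def tree_def)
    show "Q = (\<Union>t\<in>F. snd (snd t))"
      using top by (auto simp: F_def tree_def)
  qed
  moreover have "(\<Sum>(IT, \<xi>, T)\<in>F. measure lborel IT) \<le> (\<Sum>t\<in>Tops. measure lborel (bI t))"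
    using sum_image_le[OF Tops(1), of "\<lambda>(IT, \<xi>, T). measure lborel IT" "\<lambda>t. (bI t, \<xi> t, tree t)"]
    by (simp add: F_def o_def)
  ultimately show ?thesis using Q(2) by (auto simp: is_convex_forest_def)
qed

section \<open>Dyadic levels of a monotone maximal density\<close>

definition dyadic_level :: "real \<Rightarrow> nat" where
  "dyadic_level x = (LEAST n. (1/2) ^ Suc n < x)"

lemma dyadic_level_lower:
  assumes "0 < x"
  shows "(1/2) ^ Suc (dyadic_level x) < x"
proof -
  obtain n where "(1/2::real) ^ n < x" using real_arch_pow_inv[OF assms, of "1/2"] by auto
  then have "(1/2::real) ^ Suc n < x" by (rule le_less_trans[rotated]) simp
  then show ?thesis unfolding dyadic_level_def by (rule LeastI)
qed

lemma dyadic_level_upper: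
  assumes "x \<le> 1"
  shows "x \<le> (1/2) ^ dyadic_level x"
proof (cases "dyadic_level x")
  case (Suc k)
  then have "\<not> (1/2::real) ^ Suc k < x"
    using not_less_Least[of k "\<lambda>n. (1/2::real) ^ Suc n < x"] by (simp add: dyadic_level_def)
  then show ?thesis using Suc by simp
qed (use assms in simp)

lemma dyadic_level_antimono:
  assumes "0 < x" "x \<le> y"
  shows "dyadic_level y \<le> dyadic_level x"
  using dyadic_level_lower[OF assms(1)] assms(2)
  unfolding dyadic_level_def[of y] by (intro Least_le) simp

definition upper_max :: "(bitile \<Rightarrow> real) \<Rightarrow> bitile set \<Rightarrow> bitile \<Rightarrow> real" where
  "upper_max d Ps P = Max (d ` {Q\<in>Ps. bitile_le P Q})"

lemma upper_max_attained:
  assumes "finite Ps" "P \<in> Ps"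
  shows "\<exists>Q\<in>Ps. bitile_le P Q \<and> upper_max d Ps P = d Q"
proof -
  have mem: "P \<in> {Q\<in>Ps. bitile_le P Q}" using assms(2) by (simp add: bitile_le_refl)
  have "upper_max d Ps P \<in> d ` {Q\<in>Ps. bitile_le P Q}"
    unfolding upper_max_def
    by (intro Max_in finite_imageI) (simp add: assms(1), use mem in blast)
  then show ?thesis by auto
qed

lemma upper_max_ge:
  assumes "finite Ps" "Q \<in> Ps" "bitile_le P Q"
  shows "d Q \<le> upper_max d Ps P"
  unfolding upper_max_def using assms by (intro Max_ge) auto

text \<open>Passing to a larger bitile can only shrink the set over which the maximum is taken.\<close>
lemma upper_max_antimono:
  assumes "finite Ps" "Q \<in> Ps" "bitile_le P Q"
  shows "upper_max d Ps Q \<le> upper_max d Ps P"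
proof -
  have sub: "{S\<in>Ps. bitile_le Q S} \<subseteq> {S\<in>Ps. bitile_le P S}"
    using assms(3) by (auto intro: bitile_le_trans)
  have mem: "Q \<in> {S\<in>Ps. bitile_le Q S}" using assms(2) by (simp add: bitile_le_refl)
  show ?thesis
    unfolding upper_max_def
    by (intro Max_mono image_mono finite_imageI sub) (use mem in blast, simp add: assms(1))
qed

text \<open>The level is that of the maximal value of d above P;
  bitiles where this maximum vanishes are put at a common level of height at least m.\<close>
lemma dyadic_levels:
  fixes d :: "bitile \<Rightarrow> real" and m :: nat
  assumes Ps: "finite Ps" and d_le_1: "\<forall>P\<in>Ps. d P \<le> 1"
  obtains lev :: "bitile \<Rightarrow> nat" where
    "\<And>P Q. P \<in> Ps \<Longrightarrow> Q \<in> Ps \<Longrightarrow> bitile_le P Q \<Longrightarrow> lev P \<le> lev Q"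
    "\<And>P. P \<in> Ps \<Longrightarrow> d P \<le> (1/2) ^ lev P"
    "\<And>P. P \<in> Ps \<Longrightarrow> lev P < m \<Longrightarrow>
       \<exists>Q\<in>Ps. bitile_le P Q \<and> lev Q = lev P \<and> (1/2) ^ Suc (lev P) < d Q"
proof
  define M where "M = upper_max d Ps"
  define top_level where "top_level = m + (\<Sum>P\<in>Ps. dyadic_level (M P))"
  define lev where "lev P = (if 0 < M P then dyadic_level (M P) else top_level)" for P
  have M_ge: "d P \<le> M P" if "P \<in> Ps" for P
    using upper_max_ge[OF Ps that bitile_le_refl] by (simp add: M_def)
  have M_le_1: "M P \<le> 1" if "P \<in> Ps" for P
    using upper_max_attained[OF Ps that, of d] d_le_1 by (auto simp: M_def)
  have lev_le_top: "lev P \<le> top_level" if "P \<in> Ps" for P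
    using member_le_sum[OF that, of "\<lambda>P. dyadic_level (M P)"] Ps by (simp add: lev_def top_level_def)
  show "lev P \<le> lev Q" if "P \<in> Ps" "Q \<in> Ps" "bitile_le P Q" for P Q
  proof (cases "0 < M Q")
    case True
    have "M Q \<le> M P"
      using upper_max_antimono[OF Ps that(2,3)] by (simp add: M_def)
    then show ?thesis using True dyadic_level_antimono[OF True] by (simp add: lev_def)
  qed (use lev_le_top[OF that(1)] in \<open>simp add: lev_def\<close>)
  show "d P \<le> (1/2) ^ lev P" if "P \<in> Ps" for P
  proof (cases "0 < M P")
    case True
    then show ?thesis using M_ge[OF that] dyadic_level_upper[OF M_le_1[OF that]] by (simp add: lev_def)
  next
    case False
    then have "d P \<le> 0" using M_ge[OF that] by simp
    then show ?thesis by (rule order_trans) simp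
  qed
  show "\<exists>Q\<in>Ps. bitile_le P Q \<and> lev Q = lev P \<and> (1/2) ^ Suc (lev P) < d Q"
    if P: "P \<in> Ps" and low: "lev P < m" for P
  proof -
    have pos: "0 < M P" using low by (auto simp: lev_def top_level_def split: if_splits)
    obtain Q where Q: "Q \<in> Ps" "bitile_le P Q" "M P = d Q"
      using upper_max_attained[OF Ps P, of d] by (auto simp: M_def)
    have "M Q = M P"
      using upper_max_antimono[OF Ps Q(1,2), of d] M_ge[OF Q(1)] Q(3) by (simp add: M_def)
    then show ?thesis using Q pos dyadic_level_lower[OF pos] by (auto simp: lev_def)
  qed
qed

section \<open>The layer decomposition\<close>

lemma convex_level_set:
  fixes lev :: "bitile \<Rightarrow> 'a::order"
  assumes "convex_coll Ps"
    and mono: "\<And>P Q. P \<in> Ps \<Longrightarrow> Q \<in> Ps \<Longrightarrow> bitile_le P Q \<Longrightarrow> lev P \<le> lev Q"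
  shows "convex_coll {P\<in>Ps. lev P = n}"
  unfolding convex_coll_def
proof (intro ballI allI impI)
  fix P R Q assume P: "P \<in> {P\<in>Ps. lev P = n}" and R: "R \<in> {P\<in>Ps. lev P = n}"
    and le: "bitile_le P Q \<and> bitile_le Q R"
  have Q: "Q \<in> Ps" using assms(1) P R le unfolding convex_coll_def by blast
  have "lev P \<le> lev Q" "lev Q \<le> lev R" using mono[of P Q] mono[of Q R] P R Q le by auto
  then show "Q \<in> {P\<in>Ps. lev P = n}" using P R Q by (auto intro: antisym)
qed

text \<open>A convex collection over [0,1] in which every bitile lies below one of
  density above 2^-(n+1) is a convex forest of total top length at most 2^(n+1):
  the maximal bitiles of density above 2^-(n+1) serve as tops.\<close>
lemma dense_cover_forest:
  assumes N: "N \<in> borel_measurable (restrict_space lebesgue {0..})"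
    and Q: "finite Q" "Q \<subseteq> P_unit" "convex_coll Q"
    and dense_above: "\<forall>P\<in>Q. \<exists>R\<in>Q. bitile_le P R \<and> (1/2) ^ Suc n < bitile_density N R"
  shows "\<exists>F. is_convex_forest Q F \<and> (\<Sum>(IT, \<xi>, T)\<in>F. measure lborel IT) \<le> 2 * 2 ^ n"
proof -
  define A where "A = {R\<in>Q. (1/2) ^ Suc n < bitile_density N R}"
  define Tops where "Tops = {t\<in>A. \<forall>u\<in>A. bitile_le t u \<longrightarrow> u = t}"
  have "finite A" "A \<subseteq> Q" using Q(1) by (auto simp: A_def)
  moreover have "Tops \<subseteq> A" by (auto simp: Tops_def)
  ultimately have Tops: "finite Tops" "Tops \<subseteq> Q" by (auto intro: finite_subset)
  have cover: "\<forall>P\<in>Q. \<exists>t\<in>Tops. bitile_le P t"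
  proof
    fix P assume "P \<in> Q"
    then obtain R where R: "R \<in> A" "bitile_le P R" using dense_above by (auto simp: A_def)
    then obtain t where "t \<in> Tops" "bitile_le R t"
      using exists_maximal_above[OF \<open>finite A\<close> R(1)] by (auto simp: Tops_def)
    then show "\<exists>t\<in>Tops. bitile_le P t" using R(2) by (blast intro: bitile_le_trans)
  qed
  have incomparable: "\<forall>s\<in>Tops. \<forall>t\<in>Tops. bitile_le s t \<longrightarrow> s = t"
    unfolding Tops_def by blast
  have dense: "\<forall>t\<in>Tops. (1/2) ^ Suc n * measure lborel (bI t) \<le> measure lebesgue (E N t)"
  proof
    fix t assume "t \<in> Tops"
    then have "(1/2) ^ Suc n < bitile_density N t" using \<open>Tops \<subseteq> A\<close> by (auto simp: A_def)
    then show "(1/2) ^ Suc n * measure lborel (bI t) \<le> measure lebesgue (E N t)"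
      using measure_bI_pos[of t] by (simp add: bitile_density_def field_simps)
  qed
  have "(1/2) ^ Suc n * (\<Sum>t\<in>Tops. measure lborel (bI t)) \<le> 1"
    using Tops Q(2) by (intro packing_incomparable[OF N Tops(1) _ incomparable dense]) blast
  then have "(\<Sum>t\<in>Tops. measure lborel (bI t)) \<le> 2 * 2 ^ n"
    by (simp add: field_simps)
  then show ?thesis
    using forest_from_tops[OF Q(1,3) Tops(1) cover] by fastforce
qed

lemma mass_layers:
  assumes N: "N \<in> borel_measurable (restrict_space lebesgue {0..})"
    and Ps: "finite Ps" "Ps \<subseteq> P_unit" "convex_coll Ps"
  obtains Pn F where "Ps = (\<Union>n. Pn n)" "\<forall>n m. n \<noteq> m \<longrightarrow> Pn n \<inter> Pn m = {}"
    "\<forall>n. mass N (Pn n) \<le> 2 powr - real n \<and> is_convex_forest (Pn n) (F n) \<and>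
         (\<Sum>(IT, \<xi>, T)\<in>F n. measure lborel IT) \<le> 2 * 2 ^ n"
proof -
  define total where "total = (\<Sum>P\<in>Ps. measure lborel (bI P))"
  obtain m :: nat where m: "total \<le> 2 ^ m"
    using real_arch_pow[of 2 total] by (auto intro: less_imp_le)
  obtain lev where mono: "\<And>P Q. P \<in> Ps \<Longrightarrow> Q \<in> Ps \<Longrightarrow> bitile_le P Q \<Longrightarrow> lev P \<le> lev Q"
    and density: "\<And>P. P \<in> Ps \<Longrightarrow> bitile_density N P \<le> (1/2) ^ lev P"
    and dense_above: "\<And>P. P \<in> Ps \<Longrightarrow> lev P < m \<Longrightarrow>
       \<exists>Q\<in>Ps. bitile_le P Q \<and> lev Q = lev P \<and> (1/2) ^ Suc (lev P) < bitile_density N Q"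
    using dyadic_levels[OF Ps(1), of "bitile_density N" m] bitile_density_bounds by blast
  define Pn where "Pn n = {P\<in>Ps. lev P = n}" for n
  have layer: "finite (Pn n)" "Pn n \<subseteq> P_unit" "convex_coll (Pn n)" for n
    using Ps convex_level_set[OF Ps(3) mono] by (auto simp: Pn_def)
  have "\<exists>F. is_convex_forest (Pn n) F \<and> (\<Sum>(IT, \<xi>, T)\<in>F. measure lborel IT) \<le> 2 * 2 ^ n" for n
  proof (cases "n < m")
    case True
    then have "\<forall>P\<in>Pn n. \<exists>R\<in>Pn n. bitile_le P R \<and> (1/2) ^ Suc n < bitile_density N R"
      using dense_above by (fastforce simp: Pn_def)
    then show ?thesis by (rule dense_cover_forest[OF N layer])
  next
    case False
    have "(\<Sum>t\<in>Pn n. measure lborel (bI t)) \<le> total"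
      unfolding total_def using Ps(1) by (intro sum_mono2) (auto simp: Pn_def)
    also have "\<dots> \<le> 2 ^ n"
      using m power_increasing[of m n "2::real"] False by linarith
    also have "\<dots> \<le> 2 * 2 ^ n" by simp
    finally show ?thesis
      using forest_from_tops[OF layer(1,3) layer(1)] bitile_le_refl by fastforce
  qed
  then obtain F where forests: "\<forall>n. is_convex_forest (Pn n) (F n) \<and>
      (\<Sum>(IT, \<xi>, T)\<in>F n. measure lborel IT) \<le> 2 * 2 ^ n"
    by metis
  have mass: "mass N (Pn n) \<le> 2 powr - real n" for n
    using density by (intro mass_le_of_density) (auto simp: Pn_def)
  have "Ps = (\<Union>n. Pn n)" "\<forall>n m. n \<noteq> m \<longrightarrow> Pn n \<inter> Pn m = {}"
    by (auto simp: Pn_def)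
  then show thesis using that[of Pn F] forests mass by blast
qed

theorem proposition5p2:
  "\<exists>C::real. \<forall>(N :: real \<Rightarrow> real) (Ps :: bitile set).
     N \<in> borel_measurable (restrict_space lebesgue {0..}) \<and> (\<forall>x\<ge>0. N x \<ge> 0) \<and>
     finite Ps \<and> Ps \<subseteq> P_unit \<and> convex_coll Ps \<longrightarrow>
     (\<exists>(Pn :: nat \<Rightarrow> bitile set) (Pnull :: bitile set)
        (F :: nat \<Rightarrow> (real set \<times> real \<times> bitile set) set).
        Ps = (\<Union>n. Pn n) \<union> Pnull \<and>
        (\<forall>n m. n \<noteq> m \<longrightarrow> Pn n \<inter> Pn m = {}) \<and>
        (\<forall>n. Pn n \<inter> Pnull = {}) \<and>
        (\<forall>n. mass N (Pn n) \<le> 2 powr (- real n) \<and>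
             is_convex_forest (Pn n) (F n) \<and>
             (\<Sum>(IT, \<xi>, T)\<in>F n. measure lborel IT) \<le> C * 2 ^ n) \<and>
        (\<forall>P\<in>Pnull. \<forall>f x. model_op N {P} f x = 0))"
proof (rule exI[of _ 2], intro allI impI)
  fix N :: "real \<Rightarrow> real" and Ps :: "bitile set"
  assume "N \<in> borel_measurable (restrict_space lebesgue {0..}) \<and> (\<forall>x\<ge>0. N x \<ge> 0) \<and>
     finite Ps \<and> Ps \<subseteq> P_unit \<and> convex_coll Ps"
  then have N: "N \<in> borel_measurable (restrict_space lebesgue {0..})"
    and Ps: "finite Ps" "Ps \<subseteq> P_unit" "convex_coll Ps" by simp_all
  obtain Pn F where "Ps = (\<Union>n. Pn n)" "\<forall>n m. n \<noteq> m \<longrightarrow> Pn n \<inter> Pn m = {}"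
    "\<forall>n. mass N (Pn n) \<le> 2 powr - real n \<and> is_convex_forest (Pn n) (F n) \<and>
         (\<Sum>(IT, \<xi>, T)\<in>F n. measure lborel IT) \<le> 2 * 2 ^ n"
    by (rule mass_layers[OF N Ps])
  then show "\<exists>Pn Pnull F. Ps = (\<Union>n. Pn n) \<union> Pnull \<and>
        (\<forall>n m. n \<noteq> m \<longrightarrow> Pn n \<inter> Pn m = {}) \<and> (\<forall>n. Pn n \<inter> Pnull = {}) \<and>
        (\<forall>n. mass N (Pn n) \<le> 2 powr (- real n) \<and> is_convex_forest (Pn n) (F n) \<and>
             (\<Sum>(IT, \<xi>, T)\<in>F n. measure lborel IT) \<le> 2 * 2 ^ n) \<and>
        (\<forall>P\<in>Pnull. \<forall>f x. model_op N {P} f x = 0)"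
    by (intro exI[of _ Pn] exI[of _ "{}"] exI[of _ F]) simp
qed

end
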